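(* Let $(U,<)$ be a linear order and $\bar u=(u_\beta)_{\beta<\alpha}$ a sequence of elements of $U$. Then $\bar u$ is densely non-increasing if and only if for all ordinals $\beta'<\beta<\alpha$ the following two statements hold: (i) if $\beta=\beta'+1$ then $u_{\beta'}\ge u_\beta$; (ii) if $\beta$ is a limit ordinal and $\bar u$ is constant on $[\beta',\beta)$, then $u_{\beta'}\ge u_\beta$.
   Context: A sequence $(u_\beta)_{\beta<\alpha}$ (indexed by a countable ordinal $\alpha$) is constant on $[\gamma,\gamma')$ if $u_\beta=u_\gamma$ for all $\gamma\le\beta<\gamma'$. It is densely non-increasing if for all $\gamma<\gamma'\le\alpha$, either it is constant on $[\gamma,\gamma')$ or there exist $\gamma\le\beta<\beta'<\gamma'$ with $u_\beta>u_{\beta'}$. *)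

theory Defs
  imports Main "HOL-Library.Countable_Set"
begin

text \<open>Ordinals below alpha are modelled as the initial segment {b. b < a} of a
well-ordered type 'i; the sequence is u restricted to that segment.\<close>

definition constant_on_seg :: "('i::wellorder \<Rightarrow> 'u) \<Rightarrow> 'i \<Rightarrow> 'i \<Rightarrow> bool" where
  "constant_on_seg u g g' \<longleftrightarrow> (\<forall>b. g \<le> b \<and> b < g' \<longrightarrow> u b = u g)"

definition densely_nonincreasing :: "('i::wellorder \<Rightarrow> 'u::linorder) \<Rightarrow> 'i \<Rightarrow> bool" where
  "densely_nonincreasing u a \<longleftrightarrow>
     (\<forall>g g'. g < g' \<and> g' \<le> a \<longrightarrow>
        constant_on_seg u g g' \<or> (\<exists>b b'. g \<le> b \<and> b < b' \<and> b' < g' \<and> u b > u b'))"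

definition is_succ_of :: "'i::wellorder \<Rightarrow> 'i \<Rightarrow> bool" where
  "is_succ_of b' b \<longleftrightarrow> b' < b \<and> \<not> (\<exists>z. b' < z \<and> z < b)"

definition is_limit :: "'i::wellorder \<Rightarrow> bool" where
  "is_limit b \<longleftrightarrow> (\<exists>x. x < b) \<and> (\<forall>x. x < b \<longrightarrow> (\<exists>z. x < z \<and> z < b))"

end

theory Submission
  imports Defs
begin

text \<open>Both sides are equivalent to: whenever \<open>u\<close> is constant on \<open>[g, b)\<close>, then
  \<open>u b \<le> u g\<close>.  For the right-hand side, note that the segment from \<open>g\<close> to its successor
  is \<open>{g}\<close>, and every \<open>b > g\<close> is a limit or the successor of some \<open>x \<ge> g\<close>.  If \<open>u\<close> is
  densely non-increasing, apply the definition to \<open>[g, b + 1)\<close>: a strict descent there must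
  end at \<open>b\<close>.  Conversely, if \<open>u\<close> has no descent on \<open>[g, g')\<close> but is not constant there,
  the least \<open>b\<close> with \<open>u b \<noteq> u g\<close> has \<open>u\<close> constant on \<open>[g, b)\<close>, hence \<open>u b \<le> u g\<close>,
  while \<open>u g \<le> u b\<close> as there is no descent.  Countability of the index set plays no role.\<close>

lemma constant_on_segD: "constant_on_seg u g g' \<Longrightarrow> g \<le> b \<Longrightarrow> b < g' \<Longrightarrow> u b = u g"
  unfolding constant_on_seg_def by blast

lemma constant_on_seg_succ: "is_succ_of g b \<Longrightarrow> constant_on_seg u g b"
  unfolding is_succ_of_def constant_on_seg_def by (metis order.not_eq_order_implies_strict)

lemma succ_or_limit:
  fixes g b :: "'i::wellorder"
  assumes "g < b"
  obtains x where "g \<le> x" "is_succ_of x b" | "is_limit b"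
proof (cases "is_limit b")
  case False
  then obtain x where "x < b" "\<not> (\<exists>z. x < z \<and> z < b)"
    unfolding is_limit_def using assms by blast
  moreover have "g \<le> x"
    using assms calculation(2) by (metis leI)
  ultimately show thesis
    using that(1) unfolding is_succ_of_def by blast
qed

lemma densely_nonincreasing_imp_le_after_constant:
  fixes u :: "'i::wellorder \<Rightarrow> 'u::linorder"
  assumes dn: "densely_nonincreasing u a"
    and "g < b" "b < a" and const: "constant_on_seg u g b"
  shows "u b \<le> u g"
proof -
  define s where "s = (LEAST z. b < z)"
  have "b < s" "s \<le> a"
    unfolding s_def using \<open>b < a\<close> by (auto intro: LeastI Least_le)
  have below_s: "x \<le> b" if "x < s" for x
    using that unfolding s_def by (metis Least_le leD leI)
  have "g < s"
    using \<open>g < b\<close> \<open>b < s\<close> by order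
  then consider "constant_on_seg u g s"
    | b1 b2 where "g \<le> b1" "b1 < b2" "b2 < s" "u b2 < u b1"
    using dn \<open>s \<le> a\<close> unfolding densely_nonincreasing_def by blast
  then show ?thesis
  proof cases
    case 1
    then show ?thesis
      using constant_on_segD \<open>g < b\<close> \<open>b < s\<close> by (metis order.order_iff_strict order.refl)
  next
    case (2 b1 b2)
    have "b2 \<le> b"
      using below_s \<open>b2 < s\<close> .
    have "b1 < b"
      using \<open>b1 < b2\<close> \<open>b2 \<le> b\<close> by order
    then have "u b1 = u g"
      using constant_on_segD[OF const \<open>g \<le> b1\<close>] by blast
    moreover have "b2 = b"
    proof (rule ccontr)
      assume "b2 \<noteq> b"
      then have "g \<le> b2" "b2 < b"
        using \<open>g \<le> b1\<close> \<open>b1 < b2\<close> \<open>b2 \<le> b\<close> by order+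
      then have "u b2 = u g"
        by (rule constant_on_segD[OF const])
      with \<open>u b1 = u g\<close> \<open>u b2 < u b1\<close> show False
        by simp
    qed
    ultimately show ?thesis
      using \<open>u b2 < u b1\<close> by simp
  qed
qed

lemma le_after_constant_imp_densely_nonincreasing:
  fixes u :: "'i::wellorder \<Rightarrow> 'u::linorder"
  assumes le: "\<And>g b. g < b \<Longrightarrow> b < a \<Longrightarrow> constant_on_seg u g b \<Longrightarrow> u b \<le> u g"
  shows "densely_nonincreasing u a"
  unfolding densely_nonincreasing_def
proof (intro allI impI; elim conjE)
  fix g g' :: 'i
  assume "g < g'" "g' \<le> a"
  show "constant_on_seg u g g' \<or> (\<exists>b b'. g \<le> b \<and> b < b' \<and> b' < g' \<and> u b' < u b)"
  proof (rule disjCI)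
    assume no_descent: "\<not> (\<exists>b b'. g \<le> b \<and> b < b' \<and> b' < g' \<and> u b' < u b)"
    show "constant_on_seg u g g'"
    proof (rule ccontr)
      define P where "P x \<longleftrightarrow> g \<le> x \<and> x < g' \<and> u x \<noteq> u g" for x
      define b where "b = (LEAST x. P x)"
      assume "\<not> constant_on_seg u g g'"
      then have "P b"
        unfolding b_def constant_on_seg_def P_def by (metis (mono_tags, lifting) LeastI)
      then have "g < b" "b < g'" "u b \<noteq> u g"
        unfolding P_def by (auto simp: order.order_iff_strict)
      have "constant_on_seg u g b"
        unfolding constant_on_seg_def
      proof (intro allI impI)
        fix x
        assume "g \<le> x \<and> x < b"
        with \<open>b < g'\<close> have "\<not> P x"
          unfolding b_def using not_less_Least by blast
        with \<open>g \<le> x \<and> x < b\<close> \<open>b < g'\<close> show "u x = u g"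
          unfolding P_def by (meson less_trans)
      qed
      moreover have "b < a"
        using \<open>b < g'\<close> \<open>g' \<le> a\<close> by order
      ultimately have "u b \<le> u g"
        using le \<open>g < b\<close> by blast
      moreover have "u g \<le> u b"
        using no_descent \<open>g < b\<close> \<open>b < g'\<close> by (meson order.refl not_le)
      ultimately show False
        using \<open>u b \<noteq> u g\<close> by simp
    qed
  qed
qed

lemma densely_nonincreasing_iff_le_after_constant:
  fixes u :: "'i::wellorder \<Rightarrow> 'u::linorder"
  shows "densely_nonincreasing u a \<longleftrightarrow>
    (\<forall>g b. g < b \<and> b < a \<and> constant_on_seg u g b \<longrightarrow> u b \<le> u g)"
  using densely_nonincreasing_imp_le_after_constant[of u a]
    le_after_constant_imp_densely_nonincreasing[of a u]
  by blast

theorem mainTheorem6: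
  fixes u :: "'i::wellorder \<Rightarrow> 'u::linorder" and a :: 'i
  assumes "countable {b. b < a}"
  shows "densely_nonincreasing u a \<longleftrightarrow>
    (\<forall>b' b. b' < b \<and> b < a \<longrightarrow>
       (is_succ_of b' b \<longrightarrow> u b' \<ge> u b) \<and>
       (is_limit b \<and> constant_on_seg u b' b \<longrightarrow> u b' \<ge> u b))"
  unfolding densely_nonincreasing_iff_le_after_constant
proof (intro iffI allI impI conjI; elim conjE)
  fix g b
  assume le: "\<forall>g b. g < b \<and> b < a \<and> constant_on_seg u g b \<longrightarrow> u b \<le> u g"
    and "g < b" "b < a"
  show "is_succ_of g b \<Longrightarrow> u b \<le> u g"
    using le \<open>g < b\<close> \<open>b < a\<close> constant_on_seg_succ by blast
  show "is_limit b \<Longrightarrow> constant_on_seg u g b \<Longrightarrow> u b \<le> u g"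
    using le \<open>g < b\<close> \<open>b < a\<close> by blast
next
  fix g b
  assume steps: "\<forall>b' b. b' < b \<and> b < a \<longrightarrow>
       (is_succ_of b' b \<longrightarrow> u b' \<ge> u b) \<and>
       (is_limit b \<and> constant_on_seg u b' b \<longrightarrow> u b' \<ge> u b)"
    and "g < b" "b < a" "constant_on_seg u g b"
  from \<open>g < b\<close> show "u b \<le> u g"
  proof (cases rule: succ_or_limit)
    case (1 x)
    from \<open>is_succ_of x b\<close> have "x < b"
      unfolding is_succ_of_def ..
    with 1 steps \<open>b < a\<close> have "u b \<le> u x"
      by blast
    also have "u x = u g"
      using constant_on_segD[OF \<open>constant_on_seg u g b\<close> \<open>g \<le> x\<close> \<open>x < b\<close>] .
    finally show ?thesis .
  next
    case 2
    then show ?thesis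
      using steps \<open>g < b\<close> \<open>b < a\<close> \<open>constant_on_seg u g b\<close> by blast
  qed
qed

end
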